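(* There exists an integer $n_0$ such that for every integer $n\ge n_0$ there exists a regular graph on $n$ vertices that is $K_3$-saturated (that is, $\mathrm{rsat}(n,K_3)$ exists for every $n\ge n_0$).
   Context: All graphs are finite and simple. For a graph $F$, a graph $G$ is $F$-saturated if $G$ contains no copy of $F$ (as a subgraph), but adding any edge between two non-adjacent vertices of $G$ creates a copy of $F$. A graph is regular if all its vertices have the same degree. $\mathrm{rsat}(n,F)$ denotes the smallest number of edges of a regular $n$-vertex $F$-saturated graph, if such a graph exists; we say $\mathrm{rsat}(n,F)$ exists if at least one such graph exists. *)

theory Defs
  imports Main
begin

definition simple_graph :: "'a set \<Rightarrow> ('a \<Rightarrow> 'a \<Rightarrow> bool) \<Rightarrow> bool" where
  "simple_graph V E \<longleftrightarrow> finite V \<and> (\<forall>u v. E u v \<longrightarrow> u \<in> V \<and> v \<in> V)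
     \<and> (\<forall>u v. E u v \<longrightarrow> E v u) \<and> (\<forall>v. \<not> E v v)"

definition degree :: "'a set \<Rightarrow> ('a \<Rightarrow> 'a \<Rightarrow> bool) \<Rightarrow> 'a \<Rightarrow> nat" where
  "degree V E v = card {u \<in> V. E v u}"

definition regular_graph :: "'a set \<Rightarrow> ('a \<Rightarrow> 'a \<Rightarrow> bool) \<Rightarrow> bool" where
  "regular_graph V E \<longleftrightarrow> (\<exists>d. \<forall>v\<in>V. degree V E v = d)"

definition has_K3 :: "'a set \<Rightarrow> ('a \<Rightarrow> 'a \<Rightarrow> bool) \<Rightarrow> bool" where
  "has_K3 V E \<longleftrightarrow> (\<exists>a\<in>V. \<exists>b\<in>V. \<exists>c\<in>V. a \<noteq> b \<and> b \<noteq> c \<and> a \<noteq> c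
      \<and> E a b \<and> E b c \<and> E a c)"

definition add_edge :: "('a \<Rightarrow> 'a \<Rightarrow> bool) \<Rightarrow> 'a \<Rightarrow> 'a \<Rightarrow> ('a \<Rightarrow> 'a \<Rightarrow> bool)" where
  "add_edge E u v = (\<lambda>x y. E x y \<or> (x = u \<and> y = v) \<or> (x = v \<and> y = u))"

definition K3_saturated :: "'a set \<Rightarrow> ('a \<Rightarrow> 'a \<Rightarrow> bool) \<Rightarrow> bool" where
  "K3_saturated V E \<longleftrightarrow> \<not> has_K3 V E \<and>
     (\<forall>u\<in>V. \<forall>v\<in>V. u \<noteq> v \<and> \<not> E u v \<longrightarrow> has_K3 V (add_edge E u v))"

end

theory Submission
  imports Defs
begin

text \<open>A circulant graph on \<int>/n whose connection set S is symmetric and avoids 0 is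
  |S|-regular. It is triangle-free iff S is sum-free, and adding a non-edge uv creates the
  triangle u, u + p, v whenever v - u = p + q with p, q \<in> S. Hence a symmetric complete
  sum-free set (every nonzero residue outside S lies in S + S) yields a regular
  K3-saturated graph. For 6K + 4 \<le> n \<le> 8K + 5 the set \<plusminus>{K+1..2K+1} is one, and
  K = n div 7 meets these bounds once n \<ge> 28.\<close>

lemma mod_eq_if_less_double:
  fixes s N :: int
  assumes "0 \<le> s" "s < 2 * N"
  shows "s mod N = (if s < N then s else s - N)"
proof (cases "s < N")
  case False
  have "s mod N = (s - N) mod N" using assms False by (intro mod_pos_geq) auto
  also have "\<dots> = s - N" using assms False by (intro mod_pos_pos_trivial) auto
  finally show ?thesis using False by simp
qed (use assms in simp)

lemma bij_betw_diff_mod: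
  assumes "v < n"
  shows "bij_betw (\<lambda>u. (int u - int v) mod int n) {0..<n} {0..<int n}"
proof (rule bij_betwI')
  fix a b assume "a \<in> {0..<n}" "b \<in> {0..<n}"
  then have ab: "int a < int n" "int b < int n" by auto
  have "(int a - int v) mod int n = (int b - int v) mod int n \<Longrightarrow> a = b"
  proof -
    assume "(int a - int v) mod int n = (int b - int v) mod int n"
    then have "(int a - int v + int v) mod int n = (int b - int v + int v) mod int n"
      by (rule mod_add_cong) simp
    then show "a = b" using ab by simp
  qed
  then show "((int a - int v) mod int n = (int b - int v) mod int n) = (a = b)" by blast
next
  fix u show "(int u - int v) mod int n \<in> {0..<int n}" using assms by simp
next
  fix j assume j: "j \<in> {0..<int n}"
  let ?u = "nat ((int v + j) mod int n)"
  have "int ?u = (int v + j) mod int n" using assms by simp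
  then have "(int ?u - int v) mod int n = j"
    using j by (simp add: mod_diff_left_eq)
  moreover have "?u \<in> {0..<n}" using assms by (simp add: nat_less_iff)
  ultimately show "\<exists>u\<in>{0..<n}. j = (int u - int v) mod int n" by metis
qed

definition circulant :: "nat \<Rightarrow> int set \<Rightarrow> nat \<Rightarrow> nat \<Rightarrow> bool" where
  "circulant n S x y \<longleftrightarrow> x < n \<and> y < n \<and> (int y - int x) mod int n \<in> S"

lemma circulant_simple_graph:
  assumes "0 \<notin> S" and "\<And>j. j \<in> S \<Longrightarrow> (- j) mod int n \<in> S"
  shows "simple_graph {0..<n} (circulant n S)"
proof -
  have "circulant n S y x" if "circulant n S x y" for x y
  proof -
    have "(- ((int y - int x) mod int n)) mod int n \<in> S"
      using that assms(2) unfolding circulant_def by blast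
    then show ?thesis using that unfolding circulant_def by (simp add: mod_minus_eq)
  qed
  then show ?thesis using assms(1) unfolding simple_graph_def circulant_def by auto
qed

lemma circulant_degree:
  assumes "S \<subseteq> {0..<int n}" and "v < n"
  shows "degree {0..<n} (circulant n S) v = card S"
proof -
  let ?f = "\<lambda>u. (int u - int v) mod int n"
  have bij: "bij_betw ?f {0..<n} {0..<int n}" using assms(2) by (rule bij_betw_diff_mod)
  have nbhd: "{u \<in> {0..<n}. circulant n S v u} = {u \<in> {0..<n}. ?f u \<in> S}"
    using assms(2) unfolding circulant_def by auto
  have "?f ` {u \<in> {0..<n}. ?f u \<in> S} = ?f ` {0..<n} \<inter> S" by blast
  also have "\<dots> = S" using bij_betw_imp_surj_on[OF bij] assms(1) by blast
  finally have "?f ` {u \<in> {0..<n}. ?f u \<in> S} = S" .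
  then have "bij_betw ?f {u \<in> {0..<n}. ?f u \<in> S} S"
    by (intro bij_betw_subset[OF bij]) auto
  then show ?thesis unfolding degree_def nbhd by (rule bij_betw_same_card)
qed

lemma circulant_regular_graph:
  assumes "S \<subseteq> {0..<int n}"
  shows "regular_graph {0..<n} (circulant n S)"
  unfolding regular_graph_def using circulant_degree[OF assms] by auto

definition sum_free_mod :: "int \<Rightarrow> int set \<Rightarrow> bool" where
  "sum_free_mod N S \<longleftrightarrow> (\<forall>p\<in>S. \<forall>q\<in>S. (p + q) mod N \<notin> S)"

definition complete_sum_free_mod :: "int \<Rightarrow> int set \<Rightarrow> bool" where
  "complete_sum_free_mod N S \<longleftrightarrow> sum_free_mod N S \<and>
     (\<forall>r\<in>{1..<N} - S. \<exists>p\<in>S. \<exists>q\<in>S. (p + q) mod N = r)"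

lemma circulant_K3_free:
  assumes "sum_free_mod (int n) S"
  shows "\<not> has_K3 {0..<n} (circulant n S)"
proof
  assume "has_K3 {0..<n} (circulant n S)"
  then obtain a b c where "circulant n S a b" "circulant n S b c" "circulant n S a c"
    unfolding has_K3_def by blast
  moreover have "(int c - int a) mod int n
      = ((int b - int a) mod int n + (int c - int b) mod int n) mod int n"
    by (simp add: mod_add_eq)
  ultimately show False using assms unfolding sum_free_mod_def circulant_def by auto
qed

lemma circulant_add_edge_has_K3:
  assumes "S \<subseteq> {1..<int n}" and "u < n" "v < n" "u \<noteq> v"
    and "p \<in> S" "q \<in> S" "(p + q) mod int n = (int v - int u) mod int n"
  shows "has_K3 {0..<n} (add_edge (circulant n S) u v)"
proof -
  have p: "0 < p" "p < int n" and q: "0 < q" "q < int n" using assms(1,5,6) by auto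
  define w where "w = nat ((int u + p) mod int n)"
  have w: "int w = (int u + p) mod int n" "w < n"
    using assms(2) unfolding w_def by (simp_all add: nat_less_iff)
  have "(int w - int u) mod int n = p"
    using p unfolding w by (simp add: mod_diff_left_eq)
  then have uw: "circulant n S u w" using assms(2,5) w(2) unfolding circulant_def by simp
  have "(int v - int w) mod int n = ((int v - int u) - p) mod int n"
    unfolding w by (simp add: mod_diff_right_eq algebra_simps)
  also have "\<dots> = ((p + q) - p) mod int n"
    using assms(7) by (metis mod_diff_left_eq)
  also have "\<dots> = q" using q by simp
  finally have wv: "circulant n S w v" using assms(3,6) w(2) unfolding circulant_def by simp
  have "u \<noteq> w" "w \<noteq> v" using uw wv assms(1) unfolding circulant_def by auto
  then show ?thesis
    using uw wv assms(2,3,4) w(2) unfolding has_K3_def add_edge_def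
    by (intro bexI[of _ u] bexI[of _ w] bexI[of _ v]) auto
qed

lemma circulant_K3_saturated:
  assumes "S \<subseteq> {1..<int n}" and "\<And>j. j \<in> S \<Longrightarrow> (- j) mod int n \<in> S"
    and "complete_sum_free_mod (int n) S"
  shows "K3_saturated {0..<n} (circulant n S)"
  unfolding K3_saturated_def
proof (intro conjI ballI impI)
  show "\<not> has_K3 {0..<n} (circulant n S)"
    using assms(3) circulant_K3_free unfolding complete_sum_free_mod_def by blast
next
  fix u v assume u: "u \<in> {0..<n}" and v: "v \<in> {0..<n}"
    and uv: "u \<noteq> v \<and> \<not> circulant n S u v"
  let ?r = "(int v - int u) mod int n"
  have "?r \<noteq> (int u - int u) mod int n"
    using bij_betw_diff_mod[of u n] u v uv unfolding bij_betw_def inj_on_def by fastforce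
  then have "?r \<noteq> 0" by simp
  moreover have "0 \<le> ?r" "?r < int n" using u by simp_all
  ultimately have "?r \<in> {1..<int n}" unfolding atLeastLessThan_iff by (intro conjI; linarith)
  then have "?r \<in> {1..<int n} - S" using u v uv unfolding circulant_def by auto
  then obtain p q where "p \<in> S" "q \<in> S" "(p + q) mod int n = ?r"
    using assms(3) unfolding complete_sum_free_mod_def by blast
  then show "has_K3 {0..<n} (add_edge (circulant n S) u v)"
    using circulant_add_edge_has_K3[OF assms(1)] u v uv by simp
qed

definition interval_pair :: "int \<Rightarrow> int \<Rightarrow> int set" where
  "interval_pair N K = {K + 1..2 * K + 1} \<union> {N - 2 * K - 1..N - K - 1}"

lemma mem_interval_pair_iff:
  "j \<in> interval_pair N K \<longleftrightarrow> K + 1 \<le> j \<and> j \<le> 2 * K + 1 \<or> N - 2 * K - 1 \<le> j \<and> j \<le> N - K - 1"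
  unfolding interval_pair_def by simp

lemma interval_pair_subset:
  assumes "0 \<le> K" "6 * K + 4 \<le> N"
  shows "interval_pair N K \<subseteq> {1..<N}"
  using assms unfolding subset_iff mem_interval_pair_iff atLeastLessThan_iff by linarith

lemma interval_pair_uminus:
  assumes "0 \<le> K" "6 * K + 4 \<le> N" "j \<in> interval_pair N K"
  shows "(- j) mod N \<in> interval_pair N K"
proof -
  have "0 < j" "j < N" using interval_pair_subset[OF assms(1,2)] assms(3) by auto
  then have "(- j) mod N = N - j" by (simp add: zmod_zminus1_eq_if)
  then show ?thesis using assms unfolding mem_interval_pair_iff by linarith
qed

lemma interval_pair_sum_free:
  assumes "0 \<le> K" "6 * K + 4 \<le> N"
  shows "sum_free_mod N (interval_pair N K)"
  unfolding sum_free_mod_def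
proof (intro ballI)
  fix p q assume pq: "p \<in> interval_pair N K" "q \<in> interval_pair N K"
  then have "p \<in> {1..<N}" "q \<in> {1..<N}" using interval_pair_subset[OF assms] by blast+
  then have "(p + q) mod N = (if p + q < N then p + q else p + q - N)"
    by (intro mod_eq_if_less_double) auto
  then show "(p + q) mod N \<notin> interval_pair N K"
    using pq assms unfolding mem_interval_pair_iff by (auto split: if_splits)
qed

lemma interval_pair_sums_cover:
  assumes "0 \<le> K" "6 * K + 4 \<le> N" "N \<le> 8 * K + 5" "r \<in> {1..<N} - interval_pair N K"
  shows "\<exists>p\<in>interval_pair N K. \<exists>q\<in>interval_pair N K. (p + q) mod N = r"
proof -
  let ?S = "interval_pair N K"
  have r: "1 \<le> r" "r < N" "r \<notin> ?S" using assms(4) by auto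
  consider "r \<le> K" | "2 * K + 2 \<le> r" "r \<le> 4 * K + 2" | "4 * K + 3 \<le> r" "r \<le> N - 2 * K - 2"
    | "N - K \<le> r"
    using r unfolding mem_interval_pair_iff by linarith
  \<comment> \<open>r is written as a sum within one interval (cases 2, 3; for case 3 read r as r + N),
    or as an endpoint of one interval plus an element of the other (cases 1, 4).\<close>
  then show ?thesis
  proof cases
    case 1
    have "2 * K + 1 \<in> ?S" "N + r - 2 * K - 1 \<in> ?S"
      using 1 assms r unfolding mem_interval_pair_iff by linarith+
    moreover have "(2 * K + 1 + (N + r - 2 * K - 1)) mod N = r" using r by simp
    ultimately show ?thesis by blast
  next
    case 2
    have "r div 2 \<in> ?S" "r - r div 2 \<in> ?S"
      using 2 unfolding mem_interval_pair_iff by linarith+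
    moreover have "(r div 2 + (r - r div 2)) mod N = r" using r by simp
    ultimately show ?thesis by blast
  next
    case 3
    have "(r + N) div 2 \<in> ?S" "r + N - (r + N) div 2 \<in> ?S"
      using 3 assms unfolding mem_interval_pair_iff by linarith+
    moreover have "((r + N) div 2 + (r + N - (r + N) div 2)) mod N = r" using r by simp
    ultimately show ?thesis by blast
  next
    case 4
    have "N - 2 * K - 1 \<in> ?S" "r - N + 2 * K + 1 \<in> ?S"
      using 4 assms r unfolding mem_interval_pair_iff by linarith+
    moreover have "(N - 2 * K - 1 + (r - N + 2 * K + 1)) mod N = r" using r by simp
    ultimately show ?thesis by blast
  qed
qed

lemma interval_pair_complete_sum_free:
  assumes "0 \<le> K" "6 * K + 4 \<le> N" "N \<le> 8 * K + 5"
  shows "complete_sum_free_mod N (interval_pair N K)"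
  unfolding complete_sum_free_mod_def
  using interval_pair_sum_free interval_pair_sums_cover assms by blast

theorem theorem1p1:
  shows "\<exists>n0::nat. \<forall>n\<ge>n0. \<exists>E :: nat \<Rightarrow> nat \<Rightarrow> bool.
           simple_graph {0..<n} E \<and> regular_graph {0..<n} E \<and> K3_saturated {0..<n} E"
proof (intro exI allI impI)
  fix n :: nat
  assume "28 \<le> n"
  define K where "K = int (n div 7)"
  have K: "0 \<le> K" "6 * K + 4 \<le> int n" "int n \<le> 8 * K + 5"
    using \<open>28 \<le> n\<close> unfolding K_def by linarith+
  let ?S = "interval_pair (int n) K"
  have "?S \<subseteq> {1..<int n}" using interval_pair_subset K by blast
  then show "simple_graph {0..<n} (circulant n ?S) \<and> regular_graph {0..<n} (circulant n ?S)
      \<and> K3_saturated {0..<n} (circulant n ?S)"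
    using K interval_pair_uminus interval_pair_complete_sum_free
    by (auto intro!: circulant_simple_graph circulant_regular_graph circulant_K3_saturated)
qed

end
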